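(* Let $r\ge1$, let $G=(V,A)$ be a weakly connected directed graph with distinct nodes $s,t$. Then the function $\mathbb{R}_{\ge0}^A\to\mathbb{R}\cup\{\infty\}$, $y\mapsto R^y_{s,t}$, is convex.
   Context: Fix $r\ge1$. For $y\in\mathbb{R}_{\ge 0}^A$ let $\operatorname{supp}(y)=\{a\in A: y_a>0\}$, let $G'=(V,\operatorname{supp}(y))$ with node-arc incidence matrix $\Gamma'$ (entry $+1$ if the arc leaves the node, $-1$ if it enters, $0$ otherwise). Define $R^y_{s,t}=\min\{\sum_{a\in\operatorname{supp}(y)} |f_a|^{r+1}/y_a^{r} : f\in\mathbb{R}^{\operatorname{supp}(y)},\ \Gamma' f=\mathbf{1}_s-\mathbf{1}_t\}$, with $R^y_{s,t}=\infty$ if $s$ and $t$ are not connected in $G'$. *)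

theory Defs
  imports "HOL-Analysis.Analysis" "Graph_Theory.Digraph_Component"
begin

definition supp_arcs :: "('v,'e) pre_digraph \<Rightarrow> ('e \<Rightarrow> real) \<Rightarrow> 'e set" where
  "supp_arcs G y = {a \<in> arcs G. y a > 0}"

definition incidence :: "('v,'e) pre_digraph \<Rightarrow> 'v \<Rightarrow> 'e \<Rightarrow> real" where
  "incidence G v a = (if tail G a = v then 1 else 0) - (if head G a = v then 1 else 0)"

definition is_st_flow :: "('v,'e) pre_digraph \<Rightarrow> ('e \<Rightarrow> real) \<Rightarrow> 'v \<Rightarrow> 'v \<Rightarrow> ('e \<Rightarrow> real) \<Rightarrow> bool" where
  "is_st_flow G y s t f \<longleftrightarrow>
     (\<forall>a. a \<notin> supp_arcs G y \<longrightarrow> f a = 0) \<and>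
     (\<forall>v \<in> verts G. (\<Sum>a \<in> supp_arcs G y. incidence G v a * f a) =
        (if v = s then 1 else 0) - (if v = t then 1 else 0))"

text \<open>R^y_{s,t}: minimum (written as infimum, which equals the minimum whenever the
  feasible set is nonempty) of the r-energy over unit s-t flows on supp y; the infimum
  of the empty set is \<infinity>, matching the convention R = \<infinity> when s,t are disconnected.\<close>
definition eff_resistance :: "real \<Rightarrow> ('v,'e) pre_digraph \<Rightarrow> 'v \<Rightarrow> 'v \<Rightarrow> ('e \<Rightarrow> real) \<Rightarrow> ereal" where
  "eff_resistance r G s t y =
     Inf {ereal (\<Sum>a \<in> supp_arcs G y. \<bar>f a\<bar> powr (r + 1) / (y a) powr r) | f. is_st_flow G y s t f}"

end

theory Submission
  imports Defs
begin

text \<open>For \<open>y > 0\<close> the arc term \<open>\<bar>f\<bar> powr (r + 1) / y powr r\<close> is the perspective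
  \<open>y * (\<bar>f\<bar> / y) powr (r + 1)\<close> of the convex function \<open>u powr (r + 1)\<close>, hence jointly convex
  in \<open>(f, y)\<close>; on flows that vanish off the support of \<open>y\<close> the junk value \<open>x / 0 = 0\<close> extends
  this to \<open>y \<ge> 0\<close>. A convex combination of unit s-t flows for \<open>y1\<close> and \<open>y2\<close> is a unit s-t
  flow for the combined capacities, so its energy bounds the resistance there by the combination
  of the two energies; taking infima over both flows gives convexity.\<close>

lemma powr_convex_nonneg:
  fixes p :: real
  assumes "1 \<le> p"
  shows "convex_on {0..} (\<lambda>x. x powr p)"
proof (rule convex_onI)
  fix t x y :: real
  assume t: "0 < t" "t < 1" and xy: "x \<in> {0..}" "y \<in> {0..}"
  have powr_le_self: "u powr p \<le> u" if "0 < u" "u < 1" for u :: real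
    using powr_le_one_le[of u p] that assms by simp
  consider "x = 0" | "y = 0" | "0 < x" "0 < y" using xy by fastforce
  then show "((1 - t) *\<^sub>R x + t *\<^sub>R y) powr p \<le> (1 - t) * x powr p + t * y powr p"
  proof cases
    case 1
    then show ?thesis using t xy powr_le_self[of t] assms
      by (simp add: powr_mult mult_right_mono)
  next
    case 2
    then show ?thesis using t xy powr_le_self[of "1 - t"] assms
      by (simp add: powr_mult mult_right_mono)
  next
    case 3
    then show ?thesis using convex_onD[OF powr_convex[OF assms], of t x y] t by simp
  qed
qed (rule convex_real_interval)

lemma abs_powr_div_powr_homogeneous:
  fixes k x y r :: real
  assumes "0 \<le> k" "0 \<le> y"
  shows "\<bar>k * x\<bar> powr (r + 1) / (k * y) powr r = k * (\<bar>x\<bar> powr (r + 1) / y powr r)"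
proof (cases "k = 0 \<or> y = 0")
  case False
  then have "0 < k" "0 < y" using assms by auto
  then show ?thesis by (simp add: abs_mult powr_mult powr_add)
qed auto

lemma abs_powr_div_powr_eq_perspective:
  fixes x y r :: real
  assumes "0 < y"
  shows "\<bar>x\<bar> powr (r + 1) / y powr r = y * (\<bar>x\<bar> / y) powr (r + 1)"
  using assms by (simp add: powr_divide powr_add)

lemma abs_powr_div_powr_convex_pos:
  fixes r c x1 x2 y1 y2 :: real
  assumes r: "0 \<le> r" and y: "0 < y1" "0 < y2" and c: "0 \<le> c" "c \<le> 1"
  shows "\<bar>c * x1 + (1 - c) * x2\<bar> powr (r + 1) / (c * y1 + (1 - c) * y2) powr r
    \<le> c * (\<bar>x1\<bar> powr (r + 1) / y1 powr r) + (1 - c) * (\<bar>x2\<bar> powr (r + 1) / y2 powr r)"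
proof -
  define Y where "Y = c * y1 + (1 - c) * y2"
  define l where "l = (1 - c) * y2 / Y"
  have Y: "0 < Y"
    unfolding Y_def using y c by (cases "c = 0") (auto intro: add_pos_nonneg)
  have l: "0 \<le> l" "l \<le> 1" "Y * l = (1 - c) * y2" "Y * (1 - l) = c * y1"
    using Y y c by (auto simp: l_def Y_def field_simps)
  have "\<bar>c * x1 + (1 - c) * x2\<bar> \<le> c * \<bar>x1\<bar> + (1 - c) * \<bar>x2\<bar>"
    using c abs_triangle_ineq[of "c * x1" "(1 - c) * x2"] by (simp add: abs_mult)
  also have "\<dots> = (Y * (1 - l)) * (\<bar>x1\<bar> / y1) + (Y * l) * (\<bar>x2\<bar> / y2)"
    using y by (simp add: l)
  also have "\<dots> = Y * ((1 - l) * (\<bar>x1\<bar> / y1) + l * (\<bar>x2\<bar> / y2))"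
    by (simp only: distrib_left mult.assoc)
  finally have "\<bar>c * x1 + (1 - c) * x2\<bar> / Y \<le> (1 - l) * (\<bar>x1\<bar> / y1) + l * (\<bar>x2\<bar> / y2)"
    using Y by (simp add: divide_le_eq mult.commute)
  then have "(\<bar>c * x1 + (1 - c) * x2\<bar> / Y) powr (r + 1)
      \<le> ((1 - l) * (\<bar>x1\<bar> / y1) + l * (\<bar>x2\<bar> / y2)) powr (r + 1)"
    using r Y by (intro powr_mono2) auto
  also have "\<dots> \<le> (1 - l) * (\<bar>x1\<bar> / y1) powr (r + 1) + l * (\<bar>x2\<bar> / y2) powr (r + 1)"
    using convex_onD[OF powr_convex_nonneg, of "r + 1" l "\<bar>x1\<bar> / y1" "\<bar>x2\<bar> / y2"] r l y
    by simp
  finally have convex: "(\<bar>c * x1 + (1 - c) * x2\<bar> / Y) powr (r + 1)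
      \<le> (1 - l) * (\<bar>x1\<bar> / y1) powr (r + 1) + l * (\<bar>x2\<bar> / y2) powr (r + 1)" .
  have "\<bar>c * x1 + (1 - c) * x2\<bar> powr (r + 1) / Y powr r
      = Y * (\<bar>c * x1 + (1 - c) * x2\<bar> / Y) powr (r + 1)"
    using Y by (rule abs_powr_div_powr_eq_perspective)
  also have "\<dots> \<le> Y * ((1 - l) * (\<bar>x1\<bar> / y1) powr (r + 1) + l * (\<bar>x2\<bar> / y2) powr (r + 1))"
    using convex Y by (intro mult_left_mono) auto
  also have "\<dots> = (Y * (1 - l)) * (\<bar>x1\<bar> / y1) powr (r + 1) + (Y * l) * (\<bar>x2\<bar> / y2) powr (r + 1)"
    by (simp only: distrib_left mult.assoc)
  also have "\<dots> = c * (y1 * (\<bar>x1\<bar> / y1) powr (r + 1)) + (1 - c) * (y2 * (\<bar>x2\<bar> / y2) powr (r + 1))"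
    by (simp add: l)
  also have "\<dots> = c * (\<bar>x1\<bar> powr (r + 1) / y1 powr r) + (1 - c) * (\<bar>x2\<bar> powr (r + 1) / y2 powr r)"
    using y by (simp add: abs_powr_div_powr_eq_perspective)
  finally show ?thesis
    unfolding Y_def .
qed

lemma abs_powr_div_powr_convex:
  fixes r c x1 x2 y1 y2 :: real
  assumes r: "0 \<le> r" and y: "0 \<le> y1" "0 \<le> y2" and c: "0 \<le> c" "c \<le> 1"
    and x1: "y1 = 0 \<Longrightarrow> x1 = 0" and x2: "y2 = 0 \<Longrightarrow> x2 = 0"
  shows "\<bar>c * x1 + (1 - c) * x2\<bar> powr (r + 1) / (c * y1 + (1 - c) * y2) powr r
    \<le> c * (\<bar>x1\<bar> powr (r + 1) / y1 powr r) + (1 - c) * (\<bar>x2\<bar> powr (r + 1) / y2 powr r)"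
proof -
  consider "y1 = 0" | "y2 = 0" | "0 < y1" "0 < y2" using y by fastforce
  then show ?thesis
  proof cases
    case 1
    then show ?thesis
      using x1 abs_powr_div_powr_homogeneous[of "1 - c" y2 x2 r] y c by simp
  next
    case 2
    then show ?thesis
      using x2 abs_powr_div_powr_homogeneous[of c y1 x1 r] y c by simp
  next
    case 3
    then show ?thesis using abs_powr_div_powr_convex_pos r c by blast
  qed
qed

definition flow_energy :: "real \<Rightarrow> ('v,'e) pre_digraph \<Rightarrow> ('e \<Rightarrow> real) \<Rightarrow> ('e \<Rightarrow> real) \<Rightarrow> real" where
  "flow_energy r G y f = (\<Sum>a \<in> supp_arcs G y. \<bar>f a\<bar> powr (r + 1) / (y a) powr r)"

lemma eff_resistance_eq_Inf_flow_energy: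
  "eff_resistance r G s t y = Inf {ereal (flow_energy r G y f) | f. is_st_flow G y s t f}"
  unfolding eff_resistance_def flow_energy_def ..

lemma flow_energy_nonneg: "0 \<le> flow_energy r G y f"
  unfolding flow_energy_def by (intro sum_nonneg) auto

lemma flow_energy_eq_sum_arcs:
  assumes "finite (arcs G)" and "\<forall>a. a \<notin> supp_arcs G y \<longrightarrow> f a = 0"
  shows "flow_energy r G y f = (\<Sum>a \<in> arcs G. \<bar>f a\<bar> powr (r + 1) / (y a) powr r)"
  unfolding flow_energy_def
  using assms by (intro sum.mono_neutral_left) (auto simp: supp_arcs_def)

lemma is_st_flow_iff_sum_arcs:
  assumes "finite (arcs G)"
  shows "is_st_flow G y s t f \<longleftrightarrow>
     (\<forall>a. a \<notin> supp_arcs G y \<longrightarrow> f a = 0) \<and>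
     (\<forall>v \<in> verts G. (\<Sum>a \<in> arcs G. incidence G v a * f a) =
        (if v = s then 1 else 0) - (if v = t then 1 else 0))"
proof -
  have "(\<Sum>a \<in> supp_arcs G y. incidence G v a * f a) = (\<Sum>a \<in> arcs G. incidence G v a * f a)"
    if "\<forall>a. a \<notin> supp_arcs G y \<longrightarrow> f a = 0" for v
    using assms that by (intro sum.mono_neutral_left) (auto simp: supp_arcs_def)
  then show ?thesis
    unfolding is_st_flow_def by auto
qed

lemma convex_combination_zero_outside_supp_arcs:
  fixes c :: real
  assumes "\<forall>a \<in> arcs G. 0 \<le> y1 a" "\<forall>a \<in> arcs G. 0 \<le> y2 a" "0 \<le> c" "c \<le> 1"
    and "\<forall>a. a \<notin> supp_arcs G y1 \<longrightarrow> f1 a = 0" "\<forall>a. a \<notin> supp_arcs G y2 \<longrightarrow> f2 a = 0"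
  shows "\<forall>a. a \<notin> supp_arcs G (\<lambda>a. c * y1 a + (1 - c) * y2 a) \<longrightarrow> c * f1 a + (1 - c) * f2 a = 0"
proof (intro allI impI)
  fix a
  assume "a \<notin> supp_arcs G (\<lambda>a. c * y1 a + (1 - c) * y2 a)"
  moreover have "c * y1 a = 0 \<and> (1 - c) * y2 a = 0" if "a \<in> arcs G"
  proof -
    have "0 \<le> c * y1 a" "0 \<le> (1 - c) * y2 a"
      using assms(1-4) that by auto
    moreover have "c * y1 a + (1 - c) * y2 a \<le> 0"
      using \<open>a \<notin> _\<close> that unfolding supp_arcs_def by auto
    ultimately show ?thesis by linarith
  qed
  ultimately show "c * f1 a + (1 - c) * f2 a = 0"
    using assms(5,6) unfolding supp_arcs_def by (cases "a \<in> arcs G") auto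
qed

lemma is_st_flow_convex_combination:
  fixes c :: real
  assumes fin: "finite (arcs G)"
    and y: "\<forall>a \<in> arcs G. 0 \<le> y1 a" "\<forall>a \<in> arcs G. 0 \<le> y2 a" and c: "0 \<le> c" "c \<le> 1"
    and f1: "is_st_flow G y1 s t f1" and f2: "is_st_flow G y2 s t f2"
  shows "is_st_flow G (\<lambda>a. c * y1 a + (1 - c) * y2 a) s t (\<lambda>a. c * f1 a + (1 - c) * f2 a)"
  unfolding is_st_flow_iff_sum_arcs[OF fin]
proof (intro conjI ballI)
  show "\<forall>a. a \<notin> supp_arcs G (\<lambda>a. c * y1 a + (1 - c) * y2 a) \<longrightarrow> c * f1 a + (1 - c) * f2 a = 0"
    using f1 f2 by (intro convex_combination_zero_outside_supp_arcs y c)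
      (auto simp: is_st_flow_iff_sum_arcs[OF fin])
next
  fix v
  assume "v \<in> verts G"
  have "(\<Sum>a \<in> arcs G. incidence G v a * (c * f1 a + (1 - c) * f2 a))
      = c * (\<Sum>a \<in> arcs G. incidence G v a * f1 a) + (1 - c) * (\<Sum>a \<in> arcs G. incidence G v a * f2 a)"
    by (simp add: distrib_left sum.distrib sum_distrib_left mult.left_commute)
  also have "\<dots> = (if v = s then 1 else 0) - (if v = t then 1 else 0)"
  proof -
    have conservation:
      "(\<Sum>a \<in> arcs G. incidence G v a * f1 a) = (if v = s then 1 else 0) - (if v = t then 1 else 0)"
      "(\<Sum>a \<in> arcs G. incidence G v a * f2 a) = (if v = s then 1 else 0) - (if v = t then 1 else 0)"
      using f1 f2 \<open>v \<in> verts G\<close> unfolding is_st_flow_iff_sum_arcs[OF fin] by blast+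
    show ?thesis
      unfolding conservation by (simp add: algebra_simps)
  qed
  finally show "(\<Sum>a \<in> arcs G. incidence G v a * (c * f1 a + (1 - c) * f2 a))
      = (if v = s then 1 else 0) - (if v = t then 1 else 0)" .
qed

lemma flow_energy_convex:
  fixes r c :: real
  assumes r: "0 \<le> r" and fin: "finite (arcs G)"
    and y: "\<forall>a \<in> arcs G. 0 \<le> y1 a" "\<forall>a \<in> arcs G. 0 \<le> y2 a" and c: "0 \<le> c" "c \<le> 1"
    and f1: "is_st_flow G y1 s t f1" and f2: "is_st_flow G y2 s t f2"
  shows "flow_energy r G (\<lambda>a. c * y1 a + (1 - c) * y2 a) (\<lambda>a. c * f1 a + (1 - c) * f2 a)
    \<le> c * flow_energy r G y1 f1 + (1 - c) * flow_energy r G y2 f2"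
proof -
  have zero1: "\<forall>a. a \<notin> supp_arcs G y1 \<longrightarrow> f1 a = 0"
    and zero2: "\<forall>a. a \<notin> supp_arcs G y2 \<longrightarrow> f2 a = 0"
    using f1 f2 unfolding is_st_flow_def by auto
  have "flow_energy r G (\<lambda>a. c * y1 a + (1 - c) * y2 a) (\<lambda>a. c * f1 a + (1 - c) * f2 a)
      = (\<Sum>a \<in> arcs G. \<bar>c * f1 a + (1 - c) * f2 a\<bar> powr (r + 1) / (c * y1 a + (1 - c) * y2 a) powr r)"
    using is_st_flow_convex_combination[OF fin y c f1 f2]
    by (subst flow_energy_eq_sum_arcs[OF fin]) (auto simp: is_st_flow_def)
  also have "\<dots> \<le> (\<Sum>a \<in> arcs G. c * (\<bar>f1 a\<bar> powr (r + 1) / y1 a powr r)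
      + (1 - c) * (\<bar>f2 a\<bar> powr (r + 1) / y2 a powr r))"
    using zero1 zero2 y
    by (intro sum_mono abs_powr_div_powr_convex r c) (auto simp: supp_arcs_def)
  also have "\<dots> = c * flow_energy r G y1 f1 + (1 - c) * flow_energy r G y2 f2"
    using zero1 zero2
    by (simp add: flow_energy_eq_sum_arcs[OF fin] sum.distrib sum_distrib_left)
  finally show ?thesis .
qed

lemma ereal_le_mult_Inf_add:
  fixes A :: "ereal set" and c :: real
  assumes "0 < c" "k \<noteq> -\<infinity>" "\<And>a. a \<in> A \<Longrightarrow> 0 \<le> a" "\<And>a. a \<in> A \<Longrightarrow> L \<le> ereal c * a + k"
  shows "L \<le> ereal c * Inf A + k"
proof (cases "A = {}")
  case True
  then show ?thesis using assms(1,2) by (simp add: top_ereal_def)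
next
  case False
  have "L \<le> (INF a \<in> A. ereal c * a + k)"
    using assms(4) by (rule INF_greatest)
  also have "\<dots> = (INF a \<in> A. ereal c * a) + k"
    using False assms(1-3) by (intro INF_ereal_add_left) auto
  also have "(INF a \<in> A. ereal c * a) = ereal c * Inf A"
    using ereal_Inf_cmult[OF assms(1), of "\<lambda>a. a \<in> A"] by (simp add: setcompr_eq_image)
  finally show ?thesis .
qed

lemma ereal_le_convex_combination_Inf:
  fixes A B :: "ereal set" and c :: real
  assumes c: "0 < c" "c < 1" and nonneg: "\<And>a. a \<in> A \<Longrightarrow> 0 \<le> a" "\<And>b. b \<in> B \<Longrightarrow> 0 \<le> b"
    and le: "\<And>a b. a \<in> A \<Longrightarrow> b \<in> B \<Longrightarrow> L \<le> ereal c * a + ereal (1 - c) * b"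
  shows "L \<le> ereal c * Inf A + ereal (1 - c) * Inf B"
proof -
  have bound: "L \<le> ereal c * Inf A + ereal (1 - c) * b" if "b \<in> B" for b
    using c nonneg le that by (intro ereal_le_mult_Inf_add) auto
  have "0 \<le> Inf A"
    using nonneg(1) by (rule Inf_greatest)
  then have "ereal c * Inf A \<noteq> -\<infinity>"
    using c by (simp add: ereal_zero_le_0_iff)
  with bound have "L \<le> ereal (1 - c) * Inf B + ereal c * Inf A"
    using c nonneg(2) by (intro ereal_le_mult_Inf_add) (auto simp: add.commute)
  then show ?thesis by (simp add: add.commute)
qed

lemma eff_resistance_convex_combination_le:
  fixes r c :: real
  assumes r: "0 \<le> r" and fin: "finite (arcs G)"
    and y: "\<forall>a \<in> arcs G. 0 \<le> y1 a" "\<forall>a \<in> arcs G. 0 \<le> y2 a" and c: "0 \<le> c" "c \<le> 1"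
    and f1: "is_st_flow G y1 s t f1" and f2: "is_st_flow G y2 s t f2"
  shows "eff_resistance r G s t (\<lambda>a. c * y1 a + (1 - c) * y2 a)
    \<le> ereal c * ereal (flow_energy r G y1 f1) + ereal (1 - c) * ereal (flow_energy r G y2 f2)"
proof -
  have "eff_resistance r G s t (\<lambda>a. c * y1 a + (1 - c) * y2 a)
      \<le> ereal (flow_energy r G (\<lambda>a. c * y1 a + (1 - c) * y2 a) (\<lambda>a. c * f1 a + (1 - c) * f2 a))"
    unfolding eff_resistance_eq_Inf_flow_energy
    using is_st_flow_convex_combination[OF fin y c f1 f2] by (blast intro: Inf_lower)
  also have "\<dots> \<le> ereal (c * flow_energy r G y1 f1 + (1 - c) * flow_energy r G y2 f2)"
    using flow_energy_convex[OF r fin y c f1 f2] by simp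
  finally show ?thesis by simp
qed

theorem lemma3:
  fixes r :: real and G :: "('v,'e) pre_digraph" and s t :: 'v
  assumes "r \<ge> 1"
    and "fin_digraph G"
    and "connected G"
    and "s \<in> verts G" and "t \<in> verts G" and "s \<noteq> t"
  shows "\<forall>y1 y2 (c::real).
           (\<forall>a \<in> arcs G. y1 a \<ge> 0) \<longrightarrow> (\<forall>a \<in> arcs G. y2 a \<ge> 0) \<longrightarrow>
           0 \<le> c \<longrightarrow> c \<le> 1 \<longrightarrow>
           eff_resistance r G s t (\<lambda>a. c * y1 a + (1 - c) * y2 a)
             \<le> ereal c * eff_resistance r G s t y1 + ereal (1 - c) * eff_resistance r G s t y2"
proof (intro allI impI)
  fix y1 y2 :: "'e \<Rightarrow> real" and c :: real
  assume y: "\<forall>a \<in> arcs G. 0 \<le> y1 a" "\<forall>a \<in> arcs G. 0 \<le> y2 a" and c: "0 \<le> c" "c \<le> 1"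
  have fin: "finite (arcs G)"
    using \<open>fin_digraph G\<close> by (rule fin_digraph.finite_arcs)
  consider "c = 0" | "c = 1" | "0 < c" "c < 1"
    using c by fastforce
  then show "eff_resistance r G s t (\<lambda>a. c * y1 a + (1 - c) * y2 a)
      \<le> ereal c * eff_resistance r G s t y1 + ereal (1 - c) * eff_resistance r G s t y2"
  proof cases
    case 3
    show ?thesis
      unfolding eff_resistance_eq_Inf_flow_energy[of r G s t y1] eff_resistance_eq_Inf_flow_energy[of r G s t y2]
      using 3 eff_resistance_convex_combination_le[OF _ fin y c] \<open>r \<ge> 1\<close>
      by (intro ereal_le_convex_combination_Inf) (auto simp: flow_energy_nonneg)
  qed (simp_all add: zero_ereal_def[symmetric] one_ereal_def[symmetric])
qed

end
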